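(* Let $N$ be a consistent observation machine from $Y$ to $Z$ and let $k=d(N)$. Let $X=Y\times\{0,\dots,k-1\}$, $\hat Y=Y\cup\{\bot\}$, $\hat Z=Z\cup\{\bot\}$, where $\bot$ is a fresh symbol. Then there exist Mealy machines $H$ from $X$ to $\hat Y$ and $M$ from $X$ to $\hat Z$ such that (1) $|S_H|=|S_M|=|S_N|+1$; (2) there exists a Mealy machine $T$ from $\hat Y$ to $\hat Z$ with $T\circ H\equiv M$; and (3) every Mealy machine $T$ from $\hat Y$ to $\hat Z$ with $T\circ H\equiv M$ satisfies $\lambda_T(\overline{y})=\lambda_N(\overline{y})$ for all $\overline{y}\in\Omega_N$.
   Context: An observation machine from $Y$ to $Z$ is a tuple $(Y,Z,S,D,\Delta,\lambda,r)$ with $S$ finite, $D\subseteq S\times Y$, $\Delta:D\to 2^S\setminus\{\emptyset\}$, $\lambda:D\to Z$, $r\in S$. A run on $y_0\dots y_n$ from $s_0$ is $s_0,y_0,z_0,s_1,\dots,s_{n+1}$ with $(s_i,y_i)\in D$, $s_{i+1}\in\Delta(s_i,y_i)$, $z_i=\lambda(s_i,y_i)$; $\Omega_N$ is the set of words having a run from $r$; $N$ is consistent if all runs from $r$ on each $\overline{y}\in\Omega_N$ have the same output word $\lambda_N(\overline{y})$. The degree is $d(N)=\max_{(s,y)\in D}|\Delta(s,y)|$. A Mealy machine from $X$ to $Y$ is $(X,Y,S,\delta,\lambda,r)$ with total $\delta:S\times X\to S$, $\lambda:S\times X\to Y$; $\lambda(\overline{x})$ is the output word from $r$. $T\circ H$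 is the cascade: states $S_H\times S_T$, initial $(r_H,r_T)$, and with $y=\lambda_H(s_H,x)$, $\delta((s_H,s_T),x)=(\delta_H(s_H,x),\delta_T(s_T,y))$, $\lambda((s_H,s_T),x)=\lambda_T(s_T,y)$; $\equiv$ means same output word on every input word. *)

theory Defs
  imports Main
begin

text \<open>Values of Delta and lam outside D are irrelevant.\<close>

definition obs_machine ::
  "'s set \<Rightarrow> ('s \<times> 'y) set \<Rightarrow> ('s \<Rightarrow> 'y \<Rightarrow> 's set) \<Rightarrow> ('s \<Rightarrow> 'y \<Rightarrow> 'z) \<Rightarrow> 's \<Rightarrow> bool" where
  "obs_machine S D Delta lam r \<longleftrightarrow>
     finite S \<and> D \<subseteq> S \<times> UNIV \<and> r \<in> S \<and>
     (\<forall>(s, y) \<in> D. Delta s y \<noteq> {} \<and> Delta s y \<subseteq> S)"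

fun obs_outs ::
  "('s \<times> 'y) set \<Rightarrow> ('s \<Rightarrow> 'y \<Rightarrow> 's set) \<Rightarrow> ('s \<Rightarrow> 'y \<Rightarrow> 'z) \<Rightarrow> 's \<Rightarrow> 'y list \<Rightarrow> 'z list set" where
  "obs_outs D Delta lam s [] = {[]}"
| "obs_outs D Delta lam s (y # ys) =
     (if (s, y) \<in> D
      then (\<lambda>zs. lam s y # zs) ` (\<Union>s' \<in> Delta s y. obs_outs D Delta lam s' ys)
      else {})"

definition obs_lang ::
  "('s \<times> 'y) set \<Rightarrow> ('s \<Rightarrow> 'y \<Rightarrow> 's set) \<Rightarrow> ('s \<Rightarrow> 'y \<Rightarrow> 'z) \<Rightarrow> 's \<Rightarrow> 'y list set" where
  "obs_lang D Delta lam r = {ys. obs_outs D Delta lam r ys \<noteq> {}}"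

definition obs_consistent ::
  "('s \<times> 'y) set \<Rightarrow> ('s \<Rightarrow> 'y \<Rightarrow> 's set) \<Rightarrow> ('s \<Rightarrow> 'y \<Rightarrow> 'z) \<Rightarrow> 's \<Rightarrow> bool" where
  "obs_consistent D Delta lam r \<longleftrightarrow>
     (\<forall>ys \<in> obs_lang D Delta lam r. \<forall>zs1 \<in> obs_outs D Delta lam r ys.
        \<forall>zs2 \<in> obs_outs D Delta lam r ys. zs1 = zs2)"

text \<open>lambda_N(ys): the common output word of all runs from r (for ys in Omega_N).\<close>
definition obs_output ::
  "('s \<times> 'y) set \<Rightarrow> ('s \<Rightarrow> 'y \<Rightarrow> 's set) \<Rightarrow> ('s \<Rightarrow> 'y \<Rightarrow> 'z) \<Rightarrow> 's \<Rightarrow> 'y list \<Rightarrow> 'z list" where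
  "obs_output D Delta lam r ys = (THE zs. zs \<in> obs_outs D Delta lam r ys)"

definition obs_degree :: "('s \<times> 'y) set \<Rightarrow> ('s \<Rightarrow> 'y \<Rightarrow> 's set) \<Rightarrow> nat" where
  "obs_degree D Delta =
     (if D = {} then 0 else Max ((\<lambda>(s, y). card (Delta s y)) ` D))"

definition mealy :: "'s set \<Rightarrow> 'x set \<Rightarrow> ('s \<Rightarrow> 'x \<Rightarrow> 's) \<Rightarrow> 's \<Rightarrow> bool" where
  "mealy S X delta r \<longleftrightarrow> finite S \<and> r \<in> S \<and> (\<forall>s \<in> S. \<forall>x \<in> X. delta s x \<in> S)"

fun mealy_out :: "('s \<Rightarrow> 'x \<Rightarrow> 's) \<Rightarrow> ('s \<Rightarrow> 'x \<Rightarrow> 'y) \<Rightarrow> 's \<Rightarrow> 'x list \<Rightarrow> 'y list" where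
  "mealy_out delta lam s [] = []"
| "mealy_out delta lam s (x # xs) = lam s x # mealy_out delta lam (delta s x) xs"

definition casc_delta ::
  "('h \<Rightarrow> 'x \<Rightarrow> 'h) \<Rightarrow> ('h \<Rightarrow> 'x \<Rightarrow> 'y) \<Rightarrow> ('t \<Rightarrow> 'y \<Rightarrow> 't) \<Rightarrow> ('h \<times> 't) \<Rightarrow> 'x \<Rightarrow> ('h \<times> 't)" where
  "casc_delta dH lH dT = (\<lambda>(sh, st) x. (dH sh x, dT st (lH sh x)))"

definition casc_lam ::
  "('h \<Rightarrow> 'x \<Rightarrow> 'y) \<Rightarrow> ('t \<Rightarrow> 'y \<Rightarrow> 'z) \<Rightarrow> ('h \<times> 't) \<Rightarrow> 'x \<Rightarrow> 'z" where
  "casc_lam lH lT = (\<lambda>(sh, st) x. lT st (lH sh x))"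

definition casc_equiv ::
  "'x set \<Rightarrow> ('h \<Rightarrow> 'x \<Rightarrow> 'h) \<Rightarrow> ('h \<Rightarrow> 'x \<Rightarrow> 'y) \<Rightarrow> 'h
   \<Rightarrow> ('t \<Rightarrow> 'y \<Rightarrow> 't) \<Rightarrow> ('t \<Rightarrow> 'y \<Rightarrow> 'z) \<Rightarrow> 't
   \<Rightarrow> ('m \<Rightarrow> 'x \<Rightarrow> 'm) \<Rightarrow> ('m \<Rightarrow> 'x \<Rightarrow> 'z) \<Rightarrow> 'm \<Rightarrow> bool" where
  "casc_equiv X dH lH rH dT lT rT dM lM rM \<longleftrightarrow>
     (\<forall>xs \<in> lists X.
        mealy_out (casc_delta dH lH dT) (casc_lam lH lT) (rH, rT) xs = mealy_out dM lM rM xs)"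

end

theory Submission
  imports Defs
begin

text \<open>The extra input component i resolves the nondeterminism of N: H, on (y, i), echoes y and
  moves to the i-th successor of its current state under y, while M moves in the same way but
  emits N's output; both fall into a sink state, emitting \<bottom> (here None), as soon as (s, y) is
  outside the domain.  Every run of N is then traced by some input word of H, so any T with
  T \<circ> H \<equiv> M must reproduce N's output on the words accepted by N.  Conversely the subset
  construction yields such a T: by consistency, all states reachable on the same word agree on
  their output.  Finally all state sets are renamed injectively into the naturals.\<close>

inductive run for D Delta lam where
  run_Nil: "run D Delta lam s [] [] s"
| run_Cons: "(s, y) \<in> D \<Longrightarrow> s1 \<in> Delta s y \<Longrightarrow> run D Delta lam s1 ys zs s'
    \<Longrightarrow> run D Delta lam s (y # ys) (lam s y # zs) s'"

lemma run_snoc: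
  "run D Delta lam s ys zs s1 \<Longrightarrow> (s1, y) \<in> D \<Longrightarrow> s2 \<in> Delta s1 y
    \<Longrightarrow> run D Delta lam s (ys @ [y]) (zs @ [lam s1 y]) s2"
  by (induction rule: run.induct) (auto intro: run.intros)

lemma run_append_obs_outs:
  "run D Delta lam s ys zs s1 \<Longrightarrow> zs' \<in> obs_outs D Delta lam s1 ys'
    \<Longrightarrow> zs @ zs' \<in> obs_outs D Delta lam s (ys @ ys')"
  by (induction rule: run.induct) auto

lemma obs_outs_imp_run: "zs \<in> obs_outs D Delta lam s ys \<Longrightarrow> \<exists>s'. run D Delta lam s ys zs s'"
  by (induction ys arbitrary: s zs) (auto intro: run.intros split: if_splits, metis run_Cons)

lemma obs_output_eqI:
  assumes "obs_consistent D Delta lam r" and "zs \<in> obs_outs D Delta lam r ys"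
  shows "obs_output D Delta lam r ys = zs"
  using assms unfolding obs_output_def obs_consistent_def obs_lang_def by blast

lemma obs_consistent_run_outputs_agree:
  assumes "obs_machine S D Delta lam r" and "obs_consistent D Delta lam r"
    and "run D Delta lam r ys zs1 s1" "run D Delta lam r ys zs2 s2"
    and "(s1, y) \<in> D" "(s2, y) \<in> D"
  shows "lam s1 y = lam s2 y"
proof -
  have step: "[lam s y] \<in> obs_outs D Delta lam s [y]" if "(s, y) \<in> D" for s
    using assms(1) that unfolding obs_machine_def by auto
  have "zs1 @ [lam s1 y] \<in> obs_outs D Delta lam r (ys @ [y])"
    using run_append_obs_outs[OF assms(3) step[OF assms(5)]] .
  moreover have "zs2 @ [lam s2 y] \<in> obs_outs D Delta lam r (ys @ [y])"
    using run_append_obs_outs[OF assms(4) step[OF assms(6)]] .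
  ultimately have "zs1 @ [lam s1 y] = zs2 @ [lam s2 y]"
    using obs_output_eqI[OF assms(2)] by metis
  then show ?thesis by simp
qed

lemma obs_machine_Delta:
  assumes "obs_machine S D Delta lam r" and "(s, y) \<in> D"
  shows "Delta s y \<subseteq> S" and "Delta s y \<noteq> {}" and "finite (Delta s y)"
proof -
  show "Delta s y \<subseteq> S" and "Delta s y \<noteq> {}"
    using assms unfolding obs_machine_def by auto
  then show "finite (Delta s y)"
    using assms(1) finite_subset unfolding obs_machine_def by blast
qed

lemma card_le_obs_degree:
  assumes "obs_machine S D Delta lam r" and "(s, y) \<in> D"
  shows "card (Delta s y) \<le> obs_degree D Delta"
proof -
  have "(\<lambda>(s, y). card (Delta s y)) ` D \<subseteq> {..card S}"
    using assms(1) by (fastforce simp: obs_machine_def intro: card_mono)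
  then have "finite ((\<lambda>(s, y). card (Delta s y)) ` D)"
    using finite_subset by blast
  then show ?thesis
    using assms(2) by (auto simp: obs_degree_def intro!: Max_ge)
qed

definition succ_list :: "('s \<Rightarrow> 'y \<Rightarrow> 's set) \<Rightarrow> 's \<Rightarrow> 'y \<Rightarrow> 's list" where
  "succ_list Delta s y = (SOME ss. set ss = Delta s y \<and> distinct ss)"

lemma
  assumes "finite (Delta s y)"
  shows set_succ_list: "set (succ_list Delta s y) = Delta s y"
    and length_succ_list: "length (succ_list Delta s y) = card (Delta s y)"
proof -
  have "set (succ_list Delta s y) = Delta s y \<and> distinct (succ_list Delta s y)"
    unfolding succ_list_def using someI_ex[OF finite_distinct_list[OF assms]] .
  then show "set (succ_list Delta s y) = Delta s y" "length (succ_list Delta s y) = card (Delta s y)"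
    using distinct_card by metis+
qed

fun choice_delta :: "('s \<times> 'y) set \<Rightarrow> ('s \<Rightarrow> 'y \<Rightarrow> 's set) \<Rightarrow> 's option \<Rightarrow> 'y \<times> nat \<Rightarrow> 's option" where
  "choice_delta D Delta (Some s) (y, i) =
     (if (s, y) \<in> D then Some (succ_list Delta s y ! (i mod length (succ_list Delta s y))) else None)"
| "choice_delta D Delta None x = None"

fun guarded_out :: "('s \<times> 'y) set \<Rightarrow> ('s \<Rightarrow> 'y \<Rightarrow> 'o) \<Rightarrow> 's option \<Rightarrow> 'y \<times> nat \<Rightarrow> 'o option" where
  "guarded_out D f (Some s) (y, i) = (if (s, y) \<in> D then Some (f s y) else None)"
| "guarded_out D f None x = None"

lemma choice_delta_in_Delta:
  assumes "obs_machine S D Delta lam r" and "(s, y) \<in> D"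
  obtains s' where "choice_delta D Delta (Some s) (y, i) = Some s'" and "s' \<in> Delta s y"
proof -
  have "set (succ_list Delta s y) = Delta s y" and "Delta s y \<noteq> {}"
    using obs_machine_Delta[OF assms] set_succ_list[of Delta s y] by auto
  then have "succ_list Delta s y ! (i mod length (succ_list Delta s y)) \<in> Delta s y"
    by (metis length_greater_0_conv mod_less_divisor nth_mem set_empty)
  then show ?thesis
    using that assms(2) by simp
qed

lemma choice_delta_reaches:
  assumes "obs_machine S D Delta lam r" and "(s, y) \<in> D" and "s' \<in> Delta s y"
  obtains i where "i < obs_degree D Delta" and "choice_delta D Delta (Some s) (y, i) = Some s'"
proof -
  have fin: "finite (Delta s y)"
    using obs_machine_Delta[OF assms(1,2)] by simp
  then obtain i where i: "i < length (succ_list Delta s y)" "succ_list Delta s y ! i = s'"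
    using assms(3) set_succ_list by (metis in_set_conv_nth)
  moreover have "length (succ_list Delta s y) \<le> obs_degree D Delta"
    using fin length_succ_list card_le_obs_degree[OF assms(1,2)] by metis
  ultimately show ?thesis
    using that[of i] assms(2) by simp
qed

lemma choice_delta_closed:
  assumes "obs_machine S D Delta lam r" and "q \<in> insert None (Some ` S)"
  shows "choice_delta D Delta q (y, i) \<in> insert None (Some ` S)"
proof (cases "\<exists>s. q = Some s \<and> (s, y) \<in> D")
  case True
  then obtain s s' where "q = Some s" "choice_delta D Delta q (y, i) = Some s'" "s' \<in> Delta s y"
    using choice_delta_in_Delta[OF assms(1)] by metis
  then show ?thesis
    using obs_machine_Delta(1)[OF assms(1)] True by auto
next
  case False
  then show ?thesis by (cases q) auto
qed

lemma mealy_choice_delta: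
  assumes "obs_machine S D Delta lam r"
  shows "mealy (insert None (Some ` S)) X (choice_delta D Delta) (Some r)"
  using assms choice_delta_closed[OF assms] unfolding mealy_def obs_machine_def by auto

lemma run_traced_by_choice:
  assumes "obs_machine S D Delta lam r" and "run D Delta lam s ys zs s'"
  shows "\<exists>xs \<in> lists (UNIV \<times> {0..<obs_degree D Delta}).
    mealy_out (choice_delta D Delta) (guarded_out D (\<lambda>_ y. y)) (Some s) xs = map Some ys \<and>
    mealy_out (choice_delta D Delta) (guarded_out D lam) (Some s) xs = map Some zs"
  using assms(2)
proof (induction rule: run.induct)
  case (run_Nil s)
  show ?case by (intro bexI[of _ "[]"]) auto
next
  case (run_Cons s y s1 ys zs s')
  then obtain xs where "xs \<in> lists (UNIV \<times> {0..<obs_degree D Delta})"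
    "mealy_out (choice_delta D Delta) (guarded_out D (\<lambda>_ y. y)) (Some s1) xs = map Some ys"
    "mealy_out (choice_delta D Delta) (guarded_out D lam) (Some s1) xs = map Some zs"
    by blast
  moreover obtain i where "i < obs_degree D Delta" "choice_delta D Delta (Some s) (y, i) = Some s1"
    using choice_delta_reaches[OF assms(1) run_Cons.hyps(1,2)] .
  ultimately show ?case
    using run_Cons.hyps(1) by (intro bexI[of _ "(y, i) # xs"]) auto
qed

fun subset_delta :: "('s \<times> 'y) set \<Rightarrow> ('s \<Rightarrow> 'y \<Rightarrow> 's set) \<Rightarrow> 's set \<Rightarrow> 'y option \<Rightarrow> 's set" where
  "subset_delta D Delta P None = P"
| "subset_delta D Delta P (Some y) = (\<Union>s \<in> {s \<in> P. (s, y) \<in> D}. Delta s y)"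

text \<open>Any state of P enabled on y will do: in the cascade, all of them are reachable on a common
  word, so by consistency they agree on their output.\<close>
fun subset_out :: "('s \<times> 'y) set \<Rightarrow> ('s \<Rightarrow> 'y \<Rightarrow> 'z) \<Rightarrow> 's set \<Rightarrow> 'y option \<Rightarrow> 'z option" where
  "subset_out D lam P None = None"
| "subset_out D lam P (Some y) = Some (lam (SOME s. s \<in> P \<and> (s, y) \<in> D) y)"

lemma mealy_subset_delta:
  assumes "obs_machine S D Delta lam r"
  shows "mealy (Pow S) X (subset_delta D Delta) {r}"
proof -
  have "subset_delta D Delta P u \<in> Pow S" if "P \<in> Pow S" for P u
    using that obs_machine_Delta(1)[OF assms] by (cases u) auto
  then show ?thesis
    using assms unfolding mealy_def obs_machine_def by auto
qed

lemma subset_cascade_invariant: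
  assumes "obs_machine S D Delta lam r" and "obs_consistent D Delta lam r"
    and "\<forall>s \<in> P. \<exists>zs. run D Delta lam r ys zs s" and "\<forall>s. q = Some s \<longrightarrow> s \<in> P"
  shows "mealy_out (subset_delta D Delta) (subset_out D lam) P
      (mealy_out (choice_delta D Delta) (guarded_out D (\<lambda>_ y. y)) q xs)
    = mealy_out (choice_delta D Delta) (guarded_out D lam) q xs"
  using assms(3,4)
proof (induction xs arbitrary: q ys P)
  case Nil
  show ?case by simp
next
  case (Cons x xs)
  obtain y i where x: "x = (y, i)" by fastforce
  show ?case
  proof (cases "\<exists>s. q = Some s \<and> (s, y) \<in> D")
    case True
    then obtain s s' where s: "q = Some s" "(s, y) \<in> D"
      and s': "choice_delta D Delta (Some s) (y, i) = Some s'" "s' \<in> Delta s y"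
      using choice_delta_in_Delta[OF assms(1)] by metis
    define P' where "P' = subset_delta D Delta P (Some y)"
    have "\<forall>t \<in> P'. \<exists>zs. run D Delta lam r (ys @ [y]) zs t"
      using Cons.prems(1) run_snoc unfolding P'_def by fastforce
    moreover have "s' \<in> P'"
      using s s' Cons.prems(2) unfolding P'_def by auto
    ultimately have IH:
      "mealy_out (subset_delta D Delta) (subset_out D lam) P'
          (mealy_out (choice_delta D Delta) (guarded_out D (\<lambda>_ y. y)) (Some s') xs)
        = mealy_out (choice_delta D Delta) (guarded_out D lam) (Some s') xs"
      using Cons.IH by blast
    define t where "t = (SOME t. t \<in> P \<and> (t, y) \<in> D)"
    have "\<exists>t. t \<in> P \<and> (t, y) \<in> D"
      using s Cons.prems(2) by blast
    then have t: "t \<in> P" "(t, y) \<in> D"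
      unfolding t_def by (metis (mono_tags, lifting) someI_ex)+
    obtain zs1 zs2 where "run D Delta lam r ys zs1 t" "run D Delta lam r ys zs2 s"
      using Cons.prems t(1) s(1) by blast
    then have "lam t y = lam s y"
      using obs_consistent_run_outputs_agree[OF assms(1,2)] t(2) s(2) by blast
    then have "subset_out D lam P (Some y) = Some (lam s y)"
      by (simp add: t_def)
    then show ?thesis
      using IH s s' x by (simp add: P'_def)
  next
    case False
    then show ?thesis
      using Cons.IH[where q = None and ys = ys and P = P] Cons.prems(1) x by (cases q) auto
  qed
qed

lemma subset_cascade_correct:
  assumes "obs_machine S D Delta lam r" and "obs_consistent D Delta lam r"
  shows "mealy_out (subset_delta D Delta) (subset_out D lam) {r}
      (mealy_out (choice_delta D Delta) (guarded_out D (\<lambda>_ y. y)) (Some r) xs)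
    = mealy_out (choice_delta D Delta) (guarded_out D lam) (Some r) xs"
  using subset_cascade_invariant[OF assms, of "{r}" "[]" "Some r"] by (auto intro: run_Nil)

lemma choice_cascade_determines_obs_output:
  assumes "obs_machine S D Delta lam r" and "obs_consistent D Delta lam r"
    and "\<forall>xs \<in> lists (UNIV \<times> {0..<obs_degree D Delta}).
      mealy_out dT lT rT (mealy_out (choice_delta D Delta) (guarded_out D (\<lambda>_ y. y)) (Some r) xs)
      = mealy_out (choice_delta D Delta) (guarded_out D lam) (Some r) xs"
    and "ys \<in> obs_lang D Delta lam r"
  shows "mealy_out dT lT rT (map Some ys) = map Some (obs_output D Delta lam r ys)"
proof -
  obtain zs where zs: "zs \<in> obs_outs D Delta lam r ys"
    using assms(4) unfolding obs_lang_def by blast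
  then obtain s' where "run D Delta lam r ys zs s'"
    using obs_outs_imp_run by metis
  then show ?thesis
    using run_traced_by_choice[OF assms(1)] assms(3) obs_output_eqI[OF assms(2) zs] by metis
qed

lemma mealy_out_casc:
  "mealy_out (casc_delta dH lH dT) (casc_lam lH lT) (sh, st) xs
    = mealy_out dT lT st (mealy_out dH lH sh xs)"
  by (induction xs arbitrary: sh st) (auto simp: casc_delta_def casc_lam_def)

lemma casc_equiv_iff:
  "casc_equiv X dH lH rH dT lT rT dM lM rM \<longleftrightarrow>
    (\<forall>xs \<in> lists X. mealy_out dT lT rT (mealy_out dH lH rH xs) = mealy_out dM lM rM xs)"
  by (simp add: casc_equiv_def mealy_out_casc)

definition rename_delta :: "('a \<Rightarrow> 'b) \<Rightarrow> 'a set \<Rightarrow> ('a \<Rightarrow> 'x \<Rightarrow> 'a) \<Rightarrow> 'b \<Rightarrow> 'x \<Rightarrow> 'b" where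
  "rename_delta e S delta = (\<lambda>q x. e (delta (inv_into S e q) x))"

definition rename_out :: "('a \<Rightarrow> 'b) \<Rightarrow> 'a set \<Rightarrow> ('a \<Rightarrow> 'x \<Rightarrow> 'o) \<Rightarrow> 'b \<Rightarrow> 'x \<Rightarrow> 'o" where
  "rename_out e S lam = (\<lambda>q x. lam (inv_into S e q) x)"

lemma mealy_rename:
  assumes "mealy S X delta r" and "inj_on e S"
  shows "mealy (e ` S) X (rename_delta e S delta) (e r)"
  using assms by (auto simp: mealy_def rename_delta_def)

lemma mealy_out_rename:
  assumes "mealy S X delta r" and "inj_on e S" and "xs \<in> lists X"
  shows "mealy_out (rename_delta e S delta) (rename_out e S lam) (e r) xs = mealy_out delta lam r xs"
proof -
  have "mealy_out (rename_delta e S delta) (rename_out e S lam) (e s) xs = mealy_out delta lam s xs"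
    if "s \<in> S" for s
    using assms(3) that
    by (induction xs arbitrary: s)
      (use assms(1,2) in \<open>auto simp: mealy_def rename_delta_def rename_out_def\<close>)
  then show ?thesis
    using assms(1) by (simp add: mealy_def)
qed

theorem lemma3:
  fixes S :: "'s set" and D :: "('s \<times> 'y) set" and Delta :: "'s \<Rightarrow> 'y \<Rightarrow> 's set"
    and lam :: "'s \<Rightarrow> 'y \<Rightarrow> 'z" and r :: 's
  assumes "obs_machine S D Delta lam r"
    and "obs_consistent D Delta lam r"
  shows "let k = obs_degree D Delta; X = (UNIV :: 'y set) \<times> {0..<k} in
    \<exists>(SH :: nat set) (dH :: nat \<Rightarrow> 'y \<times> nat \<Rightarrow> nat) (lH :: nat \<Rightarrow> 'y \<times> nat \<Rightarrow> 'y option) rH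
      (SM :: nat set) (dM :: nat \<Rightarrow> 'y \<times> nat \<Rightarrow> nat) (lM :: nat \<Rightarrow> 'y \<times> nat \<Rightarrow> 'z option) rM.
      mealy SH X dH rH \<and> mealy SM X dM rM \<and>
      card SH = card S + 1 \<and> card SM = card S + 1 \<and>
      (\<exists>(ST :: nat set) (dT :: nat \<Rightarrow> 'y option \<Rightarrow> nat) (lT :: nat \<Rightarrow> 'y option \<Rightarrow> 'z option) rT.
         mealy ST UNIV dT rT \<and> casc_equiv X dH lH rH dT lT rT dM lM rM) \<and>
      (\<forall>(ST :: nat set) (dT :: nat \<Rightarrow> 'y option \<Rightarrow> nat) (lT :: nat \<Rightarrow> 'y option \<Rightarrow> 'z option) rT.
         mealy ST UNIV dT rT \<and> casc_equiv X dH lH rH dT lT rT dM lM rM \<longrightarrow>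
         (\<forall>ys \<in> obs_lang D Delta lam r.
            mealy_out dT lT rT (map Some ys) = map Some (obs_output D Delta lam r ys)))"
proof -
  define SH where "SH = insert None (Some ` S)"
  let ?X = "(UNIV :: 'y set) \<times> {0..<obs_degree D Delta}"
  have "finite S"
    using assms(1) by (simp add: obs_machine_def)
  then obtain eH :: "'s option \<Rightarrow> nat" and eT :: "'s set \<Rightarrow> nat"
    where eH: "inj_on eH SH" and eT: "inj_on eT (Pow S)"
    using finite_imp_inj_to_nat_seg[of SH] finite_imp_inj_to_nat_seg[of "Pow S"]
    by (auto simp: SH_def)
  have H: "mealy SH X (choice_delta D Delta) (Some r)" for X
    unfolding SH_def using mealy_choice_delta[OF assms(1)] .
  have T: "mealy (Pow S) UNIV (subset_delta D Delta) {r}"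
    using mealy_subset_delta[OF assms(1)] .
  note out_rename = mealy_out_rename[OF H[of UNIV] eH] mealy_out_rename[OF T eT]
  let ?dH = "rename_delta eH SH (choice_delta D Delta)"
  let ?lH = "rename_out eH SH (guarded_out D (\<lambda>_ y. y))"
  let ?lM = "rename_out eH SH (guarded_out D lam)"
  let ?dT = "rename_delta eT (Pow S) (subset_delta D Delta)"
  let ?lT = "rename_out eT (Pow S) (subset_out D lam)"
  have "card (eH ` SH) = card S + 1"
    using eH \<open>finite S\<close> by (simp add: SH_def card_image card_insert_if)
  moreover have "mealy (eH ` SH) ?X ?dH (eH (Some r))"
    using mealy_rename[OF H eH] .
  moreover have "mealy (eT ` Pow S) UNIV ?dT (eT {r})
      \<and> casc_equiv ?X ?dH ?lH (eH (Some r)) ?dT ?lT (eT {r}) ?dH ?lM (eH (Some r))"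
    using mealy_rename[OF T eT] subset_cascade_correct[OF assms]
    by (simp add: casc_equiv_iff out_rename)
  moreover have "\<forall>(ST :: nat set) (dT :: nat \<Rightarrow> 'y option \<Rightarrow> nat) (lT :: nat \<Rightarrow> 'y option \<Rightarrow> 'z option) rT.
      mealy ST UNIV dT rT \<and> casc_equiv ?X ?dH ?lH (eH (Some r)) dT lT rT ?dH ?lM (eH (Some r)) \<longrightarrow>
      (\<forall>ys \<in> obs_lang D Delta lam r.
        mealy_out dT lT rT (map Some ys) = map Some (obs_output D Delta lam r ys))"
    using choice_cascade_determines_obs_output[OF assms] by (auto simp: casc_equiv_iff out_rename)
  ultimately show ?thesis
    unfolding Let_def by blast
qed

end
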